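(* For every $(\mathbf{j},y,x)\in\Sigma\times\mathbb{R}\times[0,1)$, every $n\in\mathbb{N}$ and every $r>0$, $$\mu_x\big(B^T_{(\mathbf{j},y,x)}(r)\cap\mathscr{P}^{n+1}(\mathbf{j},y,x)\big)=\frac1b\,\mu_{\frac{x+j_1}{b}}\Big(B^T_{G(\mathbf{j},y,x)}\big(\tfrac r\gamma\big)\cap\mathscr{P}^{n}\big(G(\mathbf{j},y,x)\big)\Big).$$
   Context: $b\ge2$ integer, $\gamma\in(0,1)$, $\phi$ a $\mathbb{Z}$-periodic Lipschitz function. $\Lambda=\{0,\dots,b-1\}$, $\Sigma=\Lambda^{\mathbb{Z}_+}$, $\nu$ uniform on $\Lambda$, $\sigma$ the left shift on $\Sigma$. $S(x,\mathbf{j})=\sum_{n\ge1}\gamma^{n-1}\phi\big(\frac{x+j_1+j_2b+\cdots+j_nb^{n-1}}{b^n}\big)$. $G(\mathbf{j},y,x)=\big(\sigma\mathbf{j},\ \frac{y-\phi(\frac{x+j_1}{b})}{\gamma},\ \frac{x+j_1}{b}\big)$. $\mu_x$ is the image of $\nu^{\mathbb{Z}_+}$ under $\mathbf{j}\mapsto(\mathbf{j},S(x,\mathbf{j}),x)$. $B^T_{(\mathbf{j},y,x)}(r)=\{(\mathbf{j}',y',x')\in\Sigma\times\mathbb{R}\times[0,1):|y-y'|\le r\}$. For $n\ge1$, $\mathscr{P}^n(\mathbf{j},y,x)=[j_1\cdots j_n]\times\mathbb{R}\times[0,1)$ where $[j_1\cdots j_n]$ is the cylinder of sequences starting with $j_1\cdots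 j_n$, and $\mathscr{P}^0(\mathbf{j},y,x)=\Sigma\times\mathbb{R}\times[0,1)$. *)

theory Defs
  imports "HOL-Probability.Probability"
begin

text \<open>Sequences j = (j_1, j_2, ...) are encoded 0-indexed: j 0 = j_1, j 1 = j_2, ...\<close>

definition Sig :: "nat \<Rightarrow> (nat \<Rightarrow> nat) set" where
  "Sig b = {j. \<forall>i. j i < b}"

definition nuZ :: "nat \<Rightarrow> (nat \<Rightarrow> nat) measure" where
  "nuZ b = PiM UNIV (\<lambda>_. uniform_count_measure {0..<b})"

definition shift :: "(nat \<Rightarrow> nat) \<Rightarrow> (nat \<Rightarrow> nat)" where
  "shift j = (\<lambda>i. j (Suc i))"

definition Sfun :: "nat \<Rightarrow> real \<Rightarrow> (real \<Rightarrow> real) \<Rightarrow> real \<Rightarrow> (nat \<Rightarrow> nat) \<Rightarrow> real" where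
  "Sfun b \<gamma> \<phi> x j =
     (\<Sum>m. \<gamma> ^ m * \<phi> ((x + (\<Sum>k<Suc m. real (j k) * real b ^ k)) / real b ^ Suc m))"

definition Gmap :: "nat \<Rightarrow> real \<Rightarrow> (real \<Rightarrow> real) \<Rightarrow> (nat \<Rightarrow> nat) \<times> real \<times> real
    \<Rightarrow> (nat \<Rightarrow> nat) \<times> real \<times> real" where
  "Gmap b \<gamma> \<phi> p = (case p of (j, y, x) \<Rightarrow>
     (shift j, (y - \<phi> ((x + real (j 0)) / real b)) / \<gamma>, (x + real (j 0)) / real b))"

definition mu :: "nat \<Rightarrow> real \<Rightarrow> (real \<Rightarrow> real) \<Rightarrow> real \<Rightarrow> ((nat \<Rightarrow> nat) \<times> real \<times> real) measure" where
  "mu b \<gamma> \<phi> x = distr (nuZ b) (nuZ b \<Otimes>\<^sub>M borel \<Otimes>\<^sub>M borel) (\<lambda>j. (j, Sfun b \<gamma> \<phi> x j, x))"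

definition BT :: "nat \<Rightarrow> (nat \<Rightarrow> nat) \<times> real \<times> real \<Rightarrow> real \<Rightarrow> ((nat \<Rightarrow> nat) \<times> real \<times> real) set" where
  "BT b p r = {(j', y', x'). j' \<in> Sig b \<and> x' \<in> {0..<1} \<and> \<bar>fst (snd p) - y'\<bar> \<le> r}"

definition Part :: "nat \<Rightarrow> nat \<Rightarrow> (nat \<Rightarrow> nat) \<times> real \<times> real \<Rightarrow> ((nat \<Rightarrow> nat) \<times> real \<times> real) set" where
  "Part b n p = {(j', y', x'). j' \<in> Sig b \<and> (\<forall>i<n. j' i = fst p i) \<and> x' \<in> {0..<1}}"

end

theory Submission
  imports Defs "HOL-Library.Periodic_Fun"
begin

text \<open>Under \<open>\<mu>\<^sub>x\<close> the event \<open>B\<^sup>T(r) \<inter> \<P>\<^sup>n\<^sup>+\<^sup>1\<close> is a condition on the digit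
  sequence \<open>\<omega>\<close> alone: its first \<open>n + 1\<close> digits are those of \<open>j\<close> and \<open>|y - S(x,\<omega>)| \<le> r\<close>.
  The self-similarity \<open>S(x,\<omega>) = \<phi>(x') + \<gamma> S(x',\<sigma>\<omega>)\<close> with \<open>x' = (x + \<omega>\<^sub>1)/b\<close> turns this
  into \<open>\<omega>\<^sub>1 = j\<^sub>1\<close> together with the same kind of event for \<open>\<sigma>\<omega>\<close>, with data \<open>G(j,y,x)\<close>,
  radius \<open>r/\<gamma>\<close> and \<open>n\<close> digits. Under \<open>\<nu>\<^sup>\<int>\<^sup>+\<close> the first digit is uniform on \<open>b\<close> values
  and independent of \<open>\<sigma>\<omega>\<close>, which is again \<open>\<nu>\<^sup>\<int>\<^sup>+\<close>-distributed; this gives the factor \<open>1/b\<close>.\<close>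

lemma bounded_range_periodic_continuous:
  fixes \<phi> :: "real \<Rightarrow> 'a::metric_space"
  assumes "\<And>t. \<phi> (t + 1) = \<phi> t" and "continuous_on UNIV \<phi>"
  shows "bounded (range \<phi>)"
proof -
  interpret periodic_fun_simple' \<phi> by standard (fact assms(1))
  have "range \<phi> \<subseteq> \<phi> ` {0..1}"
  proof
    fix u assume "u \<in> range \<phi>"
    then obtain t where "u = \<phi> t" by blast
    also have "\<dots> = \<phi> (frac t + of_int \<lfloor>t\<rfloor>)" by (simp add: frac_def)
    also have "\<dots> = \<phi> (frac t)" by (rule plus_of_int)
    finally show "u \<in> \<phi> ` {0..1}" using frac_lt_1[of t] by auto
  qed
  moreover have "compact (\<phi> ` {0..1})"
    using assms(2) by (intro compact_continuous_image) (auto intro: continuous_on_subset)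
  ultimately show ?thesis using compact_imp_bounded bounded_subset by blast
qed

lemma summable_power_times_bounded:
  fixes g :: "nat \<Rightarrow> real"
  assumes "\<bar>\<gamma>\<bar> < 1" and "bounded (range g)"
  shows "summable (\<lambda>m. \<gamma> ^ m * g m)"
proof -
  obtain B where B: "\<And>m. \<bar>g m\<bar> \<le> B"
    using assms(2) by (auto simp: bounded_iff)
  show ?thesis
  proof (rule summable_comparison_test)
    show "\<exists>N. \<forall>m\<ge>N. norm (\<gamma> ^ m * g m) \<le> B * \<bar>\<gamma>\<bar> ^ m"
      using mult_right_mono[OF B, of "\<bar>\<gamma>\<bar> ^ _"] by (auto simp: abs_mult power_abs mult.commute)
    show "summable (\<lambda>m. B * \<bar>\<gamma>\<bar> ^ m)"
      using assms(1) by (intro summable_mult summable_geometric) auto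
  qed
qed

lemma Sfun_shift:
  fixes \<phi> :: "real \<Rightarrow> real" and x :: real and j :: "nat \<Rightarrow> nat"
  assumes "\<bar>\<gamma>\<bar> < 1" and "bounded (range \<phi>)" and "b > 0"
  defines "x' \<equiv> (x + real (j 0)) / real b"
  shows "Sfun b \<gamma> \<phi> x j = \<phi> x' + \<gamma> * Sfun b \<gamma> \<phi> x' (shift j)"
proof -
  define f where "f m = \<gamma> ^ m * \<phi> ((x + (\<Sum>k<Suc m. real (j k) * real b ^ k)) / real b ^ Suc m)" for m
  define g where "g m = \<gamma> ^ m * \<phi> ((x' + (\<Sum>k<Suc m. real (shift j k) * real b ^ k)) / real b ^ Suc m)" for m
  have bounded_comp: "bounded (range (\<lambda>m. \<phi> (h m)))" for h
    using assms(2) by (rule bounded_subset) auto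
  have "summable f"
    unfolding f_def by (rule summable_power_times_bounded[OF assms(1) bounded_comp])
  have "summable g"
    unfolding g_def by (rule summable_power_times_bounded[OF assms(1) bounded_comp])
  have f_Suc: "f (Suc m) = \<gamma> * g m" for m
  proof -
    have "(\<Sum>k<Suc (Suc m). real (j k) * real b ^ k) = real (j 0) + real b * (\<Sum>k<Suc m. real (shift j k) * real b ^ k)"
      by (subst sum.lessThan_Suc_shift) (simp add: shift_def sum_distrib_left distrib_left mult.assoc mult.left_commute)
    then have "(x + (\<Sum>k<Suc (Suc m). real (j k) * real b ^ k)) / real b ^ Suc (Suc m)
        = (x' + (\<Sum>k<Suc m. real (shift j k) * real b ^ k)) / real b ^ Suc m"
      using assms(3) by (simp add: x'_def field_simps)
    then show ?thesis unfolding f_def g_def by simp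
  qed
  have "Sfun b \<gamma> \<phi> x j = f 0 + (\<Sum>m. f (Suc m))"
    unfolding Sfun_def f_def[symmetric] using suminf_split_head[OF \<open>summable f\<close>] by simp
  also have "\<dots> = \<phi> x' + \<gamma> * Sfun b \<gamma> \<phi> x' (shift j)"
    unfolding f_Suc suminf_mult[OF \<open>summable g\<close>] unfolding Sfun_def g_def f_def x'_def by simp
  finally show ?thesis .
qed

lemma Suc_cylinder_ball_iff:
  fixes \<phi> :: "real \<Rightarrow> real" and x :: real and j :: "nat \<Rightarrow> nat"
  assumes "0 < \<gamma>" and "\<gamma> < 1" and "bounded (range \<phi>)" and "b > 0"
  defines "x' \<equiv> (x + real (j 0)) / real b"
  shows "(\<forall>i<Suc n. \<omega> i = j i) \<and> \<bar>y - Sfun b \<gamma> \<phi> x \<omega>\<bar> \<le> r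
    \<longleftrightarrow> \<omega> 0 = j 0 \<and> (\<forall>i<n. shift \<omega> i = shift j i)
        \<and> \<bar>(y - \<phi> x') / \<gamma> - Sfun b \<gamma> \<phi> x' (shift \<omega>)\<bar> \<le> r / \<gamma>"
proof (cases "\<omega> 0 = j 0")
  case True
  then have "Sfun b \<gamma> \<phi> x \<omega> = \<phi> x' + \<gamma> * Sfun b \<gamma> \<phi> x' (shift \<omega>)"
    using Sfun_shift[of \<gamma> \<phi> b x \<omega>] assms by (simp add: x'_def)
  then have "(y - \<phi> x') / \<gamma> - Sfun b \<gamma> \<phi> x' (shift \<omega>) = (y - Sfun b \<gamma> \<phi> x \<omega>) / \<gamma>"
    using assms(1) by (simp add: field_simps)
  then have "\<bar>y - Sfun b \<gamma> \<phi> x \<omega>\<bar> \<le> r \<longleftrightarrow> \<bar>(y - \<phi> x') / \<gamma> - Sfun b \<gamma> \<phi> x' (shift \<omega>)\<bar> \<le> r / \<gamma>"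
    using assms(1) by (simp add: abs_div divide_le_cancel)
  then show ?thesis
    using True by (auto simp: shift_def All_less_Suc2)
qed auto

lemma measurable_nuZ_component[measurable]: "(\<lambda>\<omega>. \<omega> k) \<in> measurable (nuZ b) (count_space UNIV)"
proof -
  have "(\<lambda>\<omega>. \<omega> k) \<in> measurable (nuZ b) (uniform_count_measure {0..<b})"
    unfolding nuZ_def by (rule measurable_component_singleton) simp
  then show ?thesis
    by (rule measurable_compose) (simp add: measurable_cong_sets[OF sets_uniform_count_measure_count_space refl])
qed

lemma Sfun_measurable[measurable]:
  assumes [measurable]: "\<phi> \<in> borel_measurable borel"
  shows "Sfun b \<gamma> \<phi> x \<in> borel_measurable (nuZ b)"
  unfolding Sfun_def[abs_def] by measurable

lemma (in sequence_space) measure_head_shift: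
  assumes A: "A \<in> sets M" and P: "Measurable.pred S P"
  shows "measure S {\<omega> \<in> space S. \<omega> 0 \<in> A \<and> P (\<lambda>i. \<omega> (Suc i))} = measure M A * measure S {\<omega> \<in> space S. P \<omega>}"
proof -
  let ?cons = "\<lambda>(s, \<omega>). case_nat s \<omega>"
  let ?C = "{\<omega> \<in> space S. \<omega> 0 \<in> A \<and> P (\<lambda>i. \<omega> (Suc i))}"
  have [measurable]: "(\<lambda>\<omega> i. \<omega> (Suc i)) \<in> measurable S S"
    by (rule measurable_PiM_single') (auto simp: space_PiM)
  have C: "?C \<in> sets S"
    using A P by measurable
  have cons: "?cons \<in> measurable (M \<Otimes>\<^sub>M S) S"
    by measurable
  have "measure S ?C = measure (distr (M \<Otimes>\<^sub>M S) S ?cons) ?C"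
    \<comment> \<open>\<open>S\<close> is the image of \<open>M \<Otimes> S\<close> under prepending a coordinate\<close>
    by (simp add: PiM_iter)
  also have "\<dots> = measure (M \<Otimes>\<^sub>M S) (?cons -` ?C \<inter> space (M \<Otimes>\<^sub>M S))"
    by (rule measure_distr[OF cons C])
  also have "?cons -` ?C \<inter> space (M \<Otimes>\<^sub>M S) = A \<times> {\<omega> \<in> space S. P \<omega>}"
    using sets.sets_into_space[OF A]
    by (auto simp: space_pair_measure space_PiM PiE_iff split: nat.split)
  also have "measure (M \<Otimes>\<^sub>M S) (A \<times> {\<omega> \<in> space S. P \<omega>}) = measure M A * measure S {\<omega> \<in> space S. P \<omega>}"
  proof -
    have "{\<omega> \<in> space S. P \<omega>} \<in> sets S"
      using P by measurable
    then show ?thesis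
      by (simp add: measure_def P.emeasure_pair_measure_Times[OF A] enn2real_mult)
  qed
  finally show ?thesis .
qed

lemma measure_nuZ_head_shift:
  assumes "a < b" and "Measurable.pred (nuZ b) P"
  shows "measure (nuZ b) {\<omega> \<in> space (nuZ b). \<omega> 0 = a \<and> P (shift \<omega>)}
    = measure (nuZ b) {\<omega> \<in> space (nuZ b). P \<omega>} / real b"
proof -
  let ?M = "uniform_count_measure {0..<b}"
  have "prob_space ?M"
    using assms(1) by (intro prob_space_uniform_count_measure) auto
  then interpret sequence_space ?M
    by (simp add: sequence_space_def product_prob_space_def product_prob_space_axioms_def
        product_sigma_finite_def prob_space_imp_sigma_finite)
  have S: "nuZ b = S"
    by (simp add: nuZ_def)
  have "measure ?M {a} = 1 / real b"
    using assms(1) by (subst measure_uniform_count_measure) auto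
  moreover have "{a} \<in> sets ?M"
    using assms(1) by (simp add: sets_uniform_count_measure)
  ultimately show ?thesis
    using measure_head_shift[of "{a}" P] assms(2) unfolding S by (simp add: shift_def)
qed

lemma measure_mu_BT_Part:
  assumes [measurable]: "\<phi> \<in> borel_measurable borel" and "x \<in> {0..<1}"
  shows "measure (mu b \<gamma> \<phi> x) (BT b p \<rho> \<inter> Part b N p)
    = measure (nuZ b) {\<omega> \<in> space (nuZ b). (\<forall>i<N. \<omega> i = fst p i) \<and> \<bar>fst (snd p) - Sfun b \<gamma> \<phi> x \<omega>\<bar> \<le> \<rho>}"
proof -
  let ?lift = "\<lambda>\<omega>. (\<omega>, Sfun b \<gamma> \<phi> x \<omega>, x)"
  have space_nuZ: "space (nuZ b) = Sig b"
    unfolding nuZ_def Sig_def by (auto simp: space_PiM space_uniform_count_measure)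
  have cylinder: "{\<omega> \<in> space (nuZ b). \<forall>i<N. \<omega> i = fst p i} \<in> sets (nuZ b)"
    by measurable
  have "BT b p \<rho> \<inter> Part b N p
      = {\<omega> \<in> space (nuZ b). \<forall>i<N. \<omega> i = fst p i} \<times> {y. \<bar>fst (snd p) - y\<bar> \<le> \<rho>} \<times> {0..<1}"
    unfolding BT_def Part_def space_nuZ by auto
  then have "BT b p \<rho> \<inter> Part b N p \<in> sets (nuZ b \<Otimes>\<^sub>M borel \<Otimes>\<^sub>M borel)"
    using cylinder by (simp add: pair_measureI)
  moreover have "?lift \<in> measurable (nuZ b) (nuZ b \<Otimes>\<^sub>M borel \<Otimes>\<^sub>M borel)"
    by measurable
  ultimately have "measure (mu b \<gamma> \<phi> x) (BT b p \<rho> \<inter> Part b N p)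
      = measure (nuZ b) (?lift -` (BT b p \<rho> \<inter> Part b N p) \<inter> space (nuZ b))"
    unfolding mu_def by (rule measure_distr[rotated])
  also have "?lift -` (BT b p \<rho> \<inter> Part b N p) \<inter> space (nuZ b)
      = {\<omega> \<in> space (nuZ b). (\<forall>i<N. \<omega> i = fst p i) \<and> \<bar>fst (snd p) - Sfun b \<gamma> \<phi> x \<omega>\<bar> \<le> \<rho>}"
    using assms(2) unfolding BT_def Part_def space_nuZ by auto
  finally show ?thesis .
qed

theorem lemma9p1:
  fixes b :: nat and \<gamma> :: real and \<phi> :: "real \<Rightarrow> real"
    and j :: "nat \<Rightarrow> nat" and y x r :: real and n :: nat
  assumes "b \<ge> 2" and "0 < \<gamma>" and "\<gamma> < 1"
    and "\<forall>t. \<phi> (t + 1) = \<phi> t"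
    and "\<exists>L. L-lipschitz_on UNIV \<phi>"
    and "j \<in> Sig b" and "x \<in> {0..<1}" and "r > 0"
  shows "measure (mu b \<gamma> \<phi> x) (BT b (j, y, x) r \<inter> Part b (Suc n) (j, y, x))
       = 1 / real b * measure (mu b \<gamma> \<phi> ((x + real (j 0)) / real b))
           (BT b (Gmap b \<gamma> \<phi> (j, y, x)) (r / \<gamma>) \<inter> Part b n (Gmap b \<gamma> \<phi> (j, y, x)))"
proof -
  define x' where "x' = (x + real (j 0)) / real b"
  have "continuous_on UNIV \<phi>"
    using assms(5) lipschitz_on_continuous_on by blast
  then have \<phi>_meas[measurable]: "\<phi> \<in> borel_measurable borel" and "bounded (range \<phi>)"
    using assms(4) by (auto intro: borel_measurable_continuous_onI bounded_range_periodic_continuous)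
  have "j 0 < b"
    using assms(6) by (simp add: Sig_def)
  then have "x' \<in> {0..<1}"
    using assms(1,7) by (auto simp: x'_def field_simps)
  define P where "P \<omega> \<longleftrightarrow> (\<forall>i<n. \<omega> i = shift j i) \<and> \<bar>(y - \<phi> x') / \<gamma> - Sfun b \<gamma> \<phi> x' \<omega>\<bar> \<le> r / \<gamma>"
    for \<omega>
  have "Measurable.pred (nuZ b) P"
    unfolding P_def by measurable
  have "measure (mu b \<gamma> \<phi> x) (BT b (j, y, x) r \<inter> Part b (Suc n) (j, y, x))
      = measure (nuZ b) {\<omega> \<in> space (nuZ b). \<omega> 0 = j 0 \<and> P (shift \<omega>)}"
    using Suc_cylinder_ball_iff[of \<gamma> \<phi> b n \<omega> j y x r for \<omega>] assms(1-3) \<open>bounded (range \<phi>)\<close>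
    by (simp add: measure_mu_BT_Part[OF \<phi>_meas assms(7)] P_def x'_def)
  also have "\<dots> = measure (nuZ b) {\<omega> \<in> space (nuZ b). P \<omega>} / real b"
    by (rule measure_nuZ_head_shift) fact+
  also have "measure (nuZ b) {\<omega> \<in> space (nuZ b). P \<omega>}
      = measure (mu b \<gamma> \<phi> x') (BT b (Gmap b \<gamma> \<phi> (j, y, x)) (r / \<gamma>) \<inter> Part b n (Gmap b \<gamma> \<phi> (j, y, x)))"
    unfolding measure_mu_BT_Part[OF \<phi>_meas \<open>x' \<in> {0..<1}\<close>] by (simp add: P_def Gmap_def x'_def)
  finally show ?thesis
    by (simp add: x'_def)
qed

end
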